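(* For every $n\in\mathbb N$, the class $\mathcal T_n$ contains only finitely many isomorphism types, i.e. $\mathcal T_n/\cong$ is a finite set.
   Context: A partial monounary algebra is a pair $(A,f)$ with $A$ a nonempty set and $f$ a partial unary operation on $A$. It is connected if for all $x,y\in A$ there are $m,n\ge0$ with $f^m(x),f^n(y)$ defined and equal. $\mathcal T$ is the class of connected partial monounary algebras $(A,f)$ with exactly one element not in the domain of $f$; this element is denoted $c_A$. For $x\in A$: $f^{-1}(x)=\{y\in\mathrm{dom}f:f(y)=x\}$, $f^{-n}(x)=\bigcup_{z\in f^{-(n-1)}(x)}f^{-1}(z)$, $P(x)=\{x\}\cup\bigcup_{n\ge1}f^{-n}(x)$, regarded as a partial monounary algebra with $f$ restricted to those $y\in P(x)$ with $f(y)$ defined and in $P(x)$. Condition ($\bigstar$): whenever $x_1,x_2,x_3\in A$ with $f(x_1)=f(x_2)=f(x_3)$ and $P(x_1),P(x_2),P(x_3)$ pairwise isomorphic, then $|\{x_1,x_2,x_3\}|\le2$; $\mathcal T^\bigstar$ is the class of members of $\mathcal T$ satisfying ($\bigstar$). Degree: $A^{(\infty)}$ is the set of $x$ admitting $x_0=x,x_1,\dots$ with $x_n\in\mathrm{dom}f$, $f(x_n)=x_{n-1}$ for $n\ge1$; for ordinals $\lambda$, $A^{(\lambda)}=\{x\in A\setminus\bigcup_{\alpha<\lambda}A^{(\alpha)}: f^{-1}(x)\subseteq\bigcup_{\alpha<\lambda}A^{(\alpha)}\}$; $s_f(x)$ is the $\lambda$ with $x\in A^{(\lambda)}$, or $\infty$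 if $x\in A^{(\infty)}$ ($\infty$ exceeds all ordinals). For an ordinal $\beta$, $\mathcal T_\beta=\{(A,f)\in\mathcal T^\bigstar: 0<s_f(c_A)\le\beta\}$. *)

theory Defs
  imports Main
begin

definition pmua :: "'a set \<Rightarrow> ('a \<Rightarrow> 'a option) \<Rightarrow> bool" where
  "pmua A f \<longleftrightarrow> A \<noteq> {} \<and> dom f \<subseteq> A \<and> ran f \<subseteq> A"

primrec fpow :: "('a \<Rightarrow> 'a option) \<Rightarrow> nat \<Rightarrow> 'a \<Rightarrow> 'a option" where
  "fpow f 0 x = Some x"
| "fpow f (Suc m) x = Option.bind (fpow f m x) f"

definition pm_connected :: "'a set \<Rightarrow> ('a \<Rightarrow> 'a option) \<Rightarrow> bool" where
  "pm_connected A f \<longleftrightarrow>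
     (\<forall>x\<in>A. \<forall>y\<in>A. \<exists>m n. fpow f m x \<noteq> None \<and> fpow f m x = fpow f n y)"

definition in_T :: "'a set \<Rightarrow> ('a \<Rightarrow> 'a option) \<Rightarrow> bool" where
  "in_T A f \<longleftrightarrow> pmua A f \<and> pm_connected A f \<and> (\<exists>!c. c \<in> A \<and> c \<notin> dom f)"

definition cA :: "'a set \<Rightarrow> ('a \<Rightarrow> 'a option) \<Rightarrow> 'a" where
  "cA A f = (THE c. c \<in> A \<and> c \<notin> dom f)"

definition pm_iso :: "'a set \<Rightarrow> ('a \<Rightarrow> 'a option) \<Rightarrow> 'b set \<Rightarrow> ('b \<Rightarrow> 'b option) \<Rightarrow> bool" where
  "pm_iso A f B g \<longleftrightarrow> (\<exists>h. bij_betw h A B \<and> (\<forall>x\<in>A. map_option h (f x) = g (h x)))"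

definition Pset :: "'a set \<Rightarrow> ('a \<Rightarrow> 'a option) \<Rightarrow> 'a \<Rightarrow> 'a set" where
  "Pset A f x = {y \<in> A. \<exists>n. fpow f n y = Some x}"

definition Pop :: "'a set \<Rightarrow> ('a \<Rightarrow> 'a option) \<Rightarrow> 'a \<Rightarrow> ('a \<Rightarrow> 'a option)" where
  "Pop A f x = f |` {y \<in> Pset A f x. \<exists>z \<in> Pset A f x. f y = Some z}"

definition star_cond :: "'a set \<Rightarrow> ('a \<Rightarrow> 'a option) \<Rightarrow> bool" where
  "star_cond A f \<longleftrightarrow>
     (\<forall>x1\<in>A. \<forall>x2\<in>A. \<forall>x3\<in>A.
        (x1 \<in> dom f \<and> x2 \<in> dom f \<and> x3 \<in> dom f \<and> f x1 = f x2 \<and> f x2 = f x3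
         \<and> pm_iso (Pset A f x1) (Pop A f x1) (Pset A f x2) (Pop A f x2)
         \<and> pm_iso (Pset A f x1) (Pop A f x1) (Pset A f x3) (Pop A f x3)
         \<and> pm_iso (Pset A f x2) (Pop A f x2) (Pset A f x3) (Pop A f x3))
        \<longrightarrow> card {x1, x2, x3} \<le> 2)"

definition in_Tstar :: "'a set \<Rightarrow> ('a \<Rightarrow> 'a option) \<Rightarrow> bool" where
  "in_Tstar A f \<longleftrightarrow> in_T A f \<and> star_cond A f"

text \<open>Degree levels A^(k) for finite ordinals k.  below A f k = \<Union>_{j<k} A^(j).\<close>
primrec below :: "'a set \<Rightarrow> ('a \<Rightarrow> 'a option) \<Rightarrow> nat \<Rightarrow> 'a set" where
  "below A f 0 = {}"
| "below A f (Suc k) = below A f k \<union>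
     {x \<in> A. x \<notin> below A f k \<and> {y \<in> dom f. f y = Some x} \<subseteq> below A f k}"

definition level :: "'a set \<Rightarrow> ('a \<Rightarrow> 'a option) \<Rightarrow> nat \<Rightarrow> 'a set" where
  "level A f k = {x \<in> A. x \<notin> below A f k \<and> {y \<in> dom f. f y = Some x} \<subseteq> below A f k}"

definition in_T_nat :: "nat \<Rightarrow> 'a set \<Rightarrow> ('a \<Rightarrow> 'a option) \<Rightarrow> bool" where
  "in_T_nat n A f \<longleftrightarrow> in_Tstar A f \<and> (\<exists>k. 0 < k \<and> k \<le> n \<and> cA A f \<in> level A f k)"

end

theory Submission
  imports Defs
begin

text \<open>Every member of \<open>\<T>\<^sub>n\<close> is generated by \<open>c\<^sub>A\<close>, i.e. equals \<open>P(c\<^sub>A)\<close>. By induction on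
  \<open>h\<close>, \<open>|P(x)| \<le> N\<^sub>h\<close> whenever \<open>s\<^sub>f(x) < h\<close>: the children \<open>y\<close> of \<open>x\<close> have \<open>|P(y)| \<le> N\<^sub>h\<^sub>-\<^sub>1\<close>,
  so the algebras \<open>P(y)\<close> fall into finitely many isomorphism types, and by (\<open>\<bigstar>\<close>) each type
  is realised by at most two children. Hence the members of \<open>\<T>\<^sub>n\<close> have at most \<open>N\<^sub>n\<^sub>+\<^sub>1\<close> elements, and
  algebras of bounded size are, up to isomorphism, carried by subsets of a fixed finite set.\<close>

definition pm_closed :: "'a set \<Rightarrow> ('a \<Rightarrow> 'a option) \<Rightarrow> bool" where
  "pm_closed B g \<longleftrightarrow> (\<forall>x\<in>B. \<forall>z. g x = Some z \<longrightarrow> z \<in> B)"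

lemma pm_iso_trans:
  assumes "pm_iso A f B g" "pm_iso B g C k"
  shows "pm_iso A f C k"
proof -
  obtain h1 where h1: "bij_betw h1 A B" "\<forall>x\<in>A. map_option h1 (f x) = g (h1 x)"
    using assms(1) by (auto simp: pm_iso_def)
  obtain h2 where h2: "bij_betw h2 B C" "\<forall>x\<in>B. map_option h2 (g x) = k (h2 x)"
    using assms(2) by (auto simp: pm_iso_def)
  have "map_option (h2 \<circ> h1) (f x) = k ((h2 \<circ> h1) x)" if "x \<in> A" for x
  proof -
    have "map_option (h2 \<circ> h1) (f x) = map_option h2 (map_option h1 (f x))"
      by (simp add: option.map_comp)
    also have "\<dots> = map_option h2 (g (h1 x))"
      using h1 that by simp
    also have "\<dots> = k (h2 (h1 x))"
      using h1 h2 that by (meson bij_betw_apply)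
    finally show ?thesis by simp
  qed
  then show ?thesis
    using bij_betw_trans[OF h1(1) h2(1)] by (auto simp: pm_iso_def)
qed

text \<open>Closedness is needed: a value of \<open>f\<close> outside \<open>A\<close> is not hit by the inverse of \<open>h\<close>.\<close>
lemma pm_iso_sym:
  assumes "pm_iso A f B g" "pm_closed A f"
  shows "pm_iso B g A f"
proof -
  obtain h where h: "bij_betw h A B" "\<forall>x\<in>A. map_option h (f x) = g (h x)"
    using assms(1) by (auto simp: pm_iso_def)
  have inv: "bij_betw (inv_into A h) B A"
    using h(1) by (rule bij_betw_inv_into)
  have "map_option (inv_into A h) (g y) = f (inv_into A h y)" if "y \<in> B" for y
  proof -
    define x where "x = inv_into A h y"
    have x: "x \<in> A" "h x = y"
      using h(1) that inv unfolding x_def by (auto simp: bij_betw_def f_inv_into_f)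
    have "g y = map_option h (f x)"
      using h(2) x by simp
    then show ?thesis
      unfolding x_def[symmetric] using assms(2) x h(1)
      by (cases "f x") (auto simp: pm_closed_def bij_betw_def)
  qed
  then show ?thesis
    using inv by (auto simp: pm_iso_def)
qed

definition small_algebras :: "nat \<Rightarrow> (nat set \<times> (nat \<Rightarrow> nat option)) set" where
  "small_algebras m =
     {(C, k). C \<subseteq> {..<m} \<and> dom k \<subseteq> {..<m} \<and> ran k \<subseteq> {..<m} \<and> pm_closed C k}"

lemma finite_small_algebras: "finite (small_algebras m)"
proof (rule finite_subset)
  show "small_algebras m \<subseteq>
      Pow {..<m} \<times> (\<Union>D\<in>Pow {..<m}. {k. dom k = D \<and> ran k \<subseteq> {..<m}})"
    by (auto simp: small_algebras_def)
  show "finite (Pow {..<m} \<times> (\<Union>D\<in>Pow {..<m}. {k. dom k = D \<and> ran k \<subseteq> {..<m}}))"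
    by (intro finite_cartesian_product finite_UN_I finite_Pow_iff[THEN iffD2]
        finite_set_of_finite_maps) (auto intro: finite_subset)
qed

lemma ex_small_algebra_iso:
  assumes "finite B" "card B \<le> m" "pm_closed B g"
  shows "\<exists>p. p \<in> small_algebras m \<and> pm_iso B g (fst p) (snd p)"
proof -
  let ?I = "{0..<card B}"
  obtain h where h: "bij_betw h B ?I"
    using ex_bij_betw_finite_nat[OF assms(1)] by blast
  define k where "k i = (if i \<in> ?I then map_option h (g (inv_into B h i)) else None)" for i
  have hB: "x \<in> B \<Longrightarrow> h x \<in> ?I" for x
    using h by (meson bij_betw_apply)
  have invB: "i \<in> ?I \<Longrightarrow> inv_into B h i \<in> B" for i
    using h by (metis bij_betw_def inv_into_into)
  have iso: "pm_iso B g ?I k"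
    unfolding pm_iso_def using h hB by (intro exI[of _ h]) (auto simp: k_def bij_betw_def)
  have closed: "pm_closed ?I k"
  proof (unfold pm_closed_def, intro ballI allI impI)
    fix i z assume "i \<in> ?I" "k i = Some z"
    then obtain w where "g (inv_into B h i) = Some w" "z = h w"
      by (auto simp: k_def)
    then show "z \<in> ?I"
      using invB[OF \<open>i \<in> ?I\<close>] assms(3) hB by (auto simp: pm_closed_def)
  qed
  have "ran k \<subseteq> ?I"
    using closed by (auto simp: ran_def pm_closed_def k_def split: if_splits)
  moreover have "dom k \<subseteq> ?I"
    by (auto simp: k_def dom_def split: if_splits)
  ultimately have "(?I, k) \<in> small_algebras m"
    using closed assms(2) by (auto simp: small_algebras_def)
  then show ?thesis
    using iso by auto
qed

definition iso_code :: "nat \<Rightarrow> 'a set \<Rightarrow> ('a \<Rightarrow> 'a option) \<Rightarrow> nat set \<times> (nat \<Rightarrow> nat option)"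
  where "iso_code m B g = (SOME p. p \<in> small_algebras m \<and> pm_iso B g (fst p) (snd p))"

lemma iso_code:
  assumes "finite B" "card B \<le> m" "pm_closed B g"
  shows "iso_code m B g \<in> small_algebras m"
    and "pm_iso B g (fst (iso_code m B g)) (snd (iso_code m B g))"
  using someI_ex[OF ex_small_algebra_iso[OF assms]] unfolding iso_code_def by blast+

lemma pm_iso_if_iso_code_eq:
  assumes "finite A" "card A \<le> m" "pm_closed A f"
    and "finite B" "card B \<le> m" "pm_closed B g"
    and "iso_code m A f = iso_code m B g"
  shows "pm_iso A f B g"
proof -
  let ?p = "iso_code m B g"
  have "pm_iso A f (fst ?p) (snd ?p)"
    using iso_code(2)[OF assms(1-3)] assms(7) by simp
  moreover have "pm_iso (fst ?p) (snd ?p) B g"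
    using pm_iso_sym[OF iso_code(2)[OF assms(4-6)] assms(6)] .
  ultimately show ?thesis
    by (rule pm_iso_trans)
qed

lemma finite_card_le_2_if_no_three_distinct:
  assumes "\<forall>a\<in>F. \<forall>b\<in>F. \<forall>c\<in>F. card {a, b, c} \<le> 2"
  shows "finite F \<and> card F \<le> 2"
proof (rule ccontr)
  assume "\<not> (finite F \<and> card F \<le> 2)"
  then obtain G where G: "G \<subseteq> F" "card G = 3"
    by (metis infinite_arbitrarily_large not_less_eq_eq numeral_3_eq_3 numeral_2_eq_2
        obtain_subset_with_card_n)
  then obtain a b c where "G = {a, b, c}" "a \<noteq> b" "b \<noteq> c" "a \<noteq> c"
    using card_3_iff by metis
  then show False
    using G assms by fastforce
qed

lemma finite_card_le_if_fibres_le_2: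
  assumes "finite T" "\<phi> ` C \<subseteq> T"
    and "\<forall>a\<in>C. \<forall>b\<in>C. \<forall>c\<in>C. \<phi> a = \<phi> b \<and> \<phi> b = \<phi> c \<longrightarrow> card {a, b, c} \<le> 2"
  shows "finite C \<and> card C \<le> 2 * card T"
proof -
  have fibre: "finite {a\<in>C. \<phi> a = t} \<and> card {a\<in>C. \<phi> a = t} \<le> 2" for t
    using assms(3) by (intro finite_card_le_2_if_no_three_distinct) auto
  have C: "C = (\<Union>t\<in>T. {a\<in>C. \<phi> a = t})"
    using assms(2) by auto
  have "finite C"
    by (subst C) (use fibre assms(1) in auto)
  moreover have "card C \<le> (\<Sum>t\<in>T. card {a\<in>C. \<phi> a = t})"
    by (subst C) (rule card_UN_le[OF assms(1)])
  moreover have "(\<Sum>t\<in>T. card {a\<in>C. \<phi> a = t}) \<le> card T * 2"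
    using fibre sum_bounded_above[of T "\<lambda>t. card {a\<in>C. \<phi> a = t}" 2] by auto
  ultimately show ?thesis
    by linarith
qed

lemma finite_quotient_if_code:
  assumes "finite (\<phi> ` X)"
    and "\<And>p q. p \<in> X \<Longrightarrow> q \<in> X \<Longrightarrow> \<phi> p = \<phi> q \<Longrightarrow> r `` {p} = r `` {q}"
  shows "finite (X // r)"
proof (rule finite_surj[OF assms(1)])
  show "X // r \<subseteq> (\<lambda>c. r `` {SOME p. p \<in> X \<and> \<phi> p = c}) ` \<phi> ` X"
  proof
    fix Q assume "Q \<in> X // r"
    then obtain p where p: "p \<in> X" "Q = r `` {p}"
      by (auto simp: quotient_def)
    define p' where "p' = (SOME p'. p' \<in> X \<and> \<phi> p' = \<phi> p)"
    have "p' \<in> X \<and> \<phi> p' = \<phi> p"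
      unfolding p'_def by (rule someI[of _ p]) (simp add: p(1))
    then have "Q = (\<lambda>c. r `` {SOME p. p \<in> X \<and> \<phi> p = c}) (\<phi> p)"
      using assms(2)[of p' p] p unfolding p'_def by simp
    then show "Q \<in> (\<lambda>c. r `` {SOME p. p \<in> X \<and> \<phi> p = c}) ` \<phi> ` X"
      using p(1) by blast
  qed
qed

lemma below_Suc_child: "x \<in> below A f (Suc k) \<Longrightarrow> f y = Some x \<Longrightarrow> y \<in> below A f k"
proof (induction k arbitrary: x y)
  case 0
  then show ?case by auto
next
  case (Suc k)
  have "x \<in> below A f (Suc k) \<or> {z \<in> dom f. f z = Some x} \<subseteq> below A f (Suc k)"
    using Suc.prems(1) by (simp only: below.simps) blast
  moreover have "y \<in> {z \<in> dom f. f z = Some x}"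
    using Suc.prems(2) by auto
  ultimately show ?case
    using Suc.IH[of x y] Suc.prems(2) below.simps(2)[of A f k] by blast
qed

lemma below_mono: "k \<le> l \<Longrightarrow> below A f k \<subseteq> below A f l"
  by (rule lift_Suc_mono_le[of "below A f"]) auto

lemma Pset_subset_insert_children:
  assumes "dom f \<subseteq> A"
  shows "Pset A f x \<subseteq> insert x (\<Union>y\<in>{y\<in>A. f y = Some x}. Pset A f y)"
proof
  fix z assume "z \<in> Pset A f x"
  then obtain n where z: "z \<in> A" "fpow f n z = Some x"
    by (auto simp: Pset_def)
  show "z \<in> insert x (\<Union>y\<in>{y\<in>A. f y = Some x}. Pset A f y)"
  proof (cases n)
    case (Suc m)
    then obtain y where "fpow f m z = Some y" "f y = Some x"
      using z by (cases "fpow f m z") auto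
    then show ?thesis
      using z assms by (auto simp: Pset_def)
  qed (use z in simp)
qed

lemma pm_closed_Pop: "pm_closed (Pset A f y) (Pop A f y)"
  by (auto simp: pm_closed_def Pop_def restrict_map_def split: if_splits)

lemma finite_card_children_if_star:
  assumes star: "star_cond A f"
    and small: "\<And>y. y \<in> A \<Longrightarrow> f y = Some x \<Longrightarrow> finite (Pset A f y) \<and> card (Pset A f y) \<le> m"
  shows "finite {y\<in>A. f y = Some x} \<and> card {y\<in>A. f y = Some x} \<le> 2 * card (small_algebras m)"
proof (rule finite_card_le_if_fibres_le_2[OF finite_small_algebras])
  let ?C = "{y\<in>A. f y = Some x}"
  let ?\<phi> = "\<lambda>y. iso_code m (Pset A f y) (Pop A f y)"
  show "?\<phi> ` ?C \<subseteq> small_algebras m"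
    using small iso_code(1)[OF _ _ pm_closed_Pop, of A f _ m] by blast
  have iso: "pm_iso (Pset A f u) (Pop A f u) (Pset A f v) (Pop A f v)"
    if "u \<in> ?C" "v \<in> ?C" "?\<phi> u = ?\<phi> v" for u v
    using that small pm_closed_Pop by (intro pm_iso_if_iso_code_eq[of _ m]) auto
  show "\<forall>a\<in>?C. \<forall>b\<in>?C. \<forall>c\<in>?C. ?\<phi> a = ?\<phi> b \<and> ?\<phi> b = ?\<phi> c \<longrightarrow> card {a, b, c} \<le> 2"
  proof (intro ballI impI)
    fix a b c assume abc: "a \<in> ?C" "b \<in> ?C" "c \<in> ?C" "?\<phi> a = ?\<phi> b \<and> ?\<phi> b = ?\<phi> c"
    then have "a \<in> A" "b \<in> A" "c \<in> A" "f a = Some x" "f b = Some x" "f c = Some x"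
      by simp_all
    moreover have "pm_iso (Pset A f a) (Pop A f a) (Pset A f b) (Pop A f b)"
      "pm_iso (Pset A f a) (Pop A f a) (Pset A f c) (Pop A f c)"
      "pm_iso (Pset A f b) (Pop A f b) (Pset A f c) (Pop A f c)"
      using iso[OF abc(1,2)] iso[OF abc(1,3)] iso[OF abc(2,3)] abc(4) by simp_all
    ultimately show "card {a, b, c} \<le> 2"
      using star unfolding star_cond_def by (simp add: domI)
  qed
qed

text \<open>One element for \<open>x\<close> itself, plus at most two children per isomorphism type of algebras of
  size \<open>\<le> Pset_bound h\<close>, each child generating at most \<open>Pset_bound h\<close> elements.\<close>
fun Pset_bound :: "nat \<Rightarrow> nat" where
  "Pset_bound 0 = 0"
| "Pset_bound (Suc h) = Suc (2 * card (small_algebras (Pset_bound h)) * Pset_bound h)"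

lemma finite_card_Pset_below:
  assumes dom: "dom f \<subseteq> A" and star: "star_cond A f" and x: "x \<in> below A f h"
  shows "finite (Pset A f x) \<and> card (Pset A f x) \<le> Pset_bound h"
  using x
proof (induction h arbitrary: x)
  case 0
  then show ?case by simp
next
  case (Suc h)
  let ?C = "{y\<in>A. f y = Some x}"
  let ?m = "Pset_bound h"
  have P: "finite (Pset A f y) \<and> card (Pset A f y) \<le> ?m" if "y \<in> ?C" for y
    using Suc.IH below_Suc_child[OF Suc.prems] that by blast
  have C: "finite ?C \<and> card ?C \<le> 2 * card (small_algebras ?m)"
    using P by (intro finite_card_children_if_star[OF star]) auto
  have U: "finite (\<Union>y\<in>?C. Pset A f y)"
    using C P by auto
  have "card (Pset A f x) \<le> card (insert x (\<Union>y\<in>?C. Pset A f y))"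
    using Pset_subset_insert_children[OF dom] U by (intro card_mono) auto
  also have "\<dots> \<le> Suc (\<Sum>y\<in>?C. card (Pset A f y))"
    using U card_UN_le[of ?C "Pset A f"] C by (simp add: card_insert_if)
  also have "\<dots> \<le> Suc (card ?C * ?m)"
    using P sum_bounded_above[of ?C "\<lambda>y. card (Pset A f y)" ?m] by simp
  also have "\<dots> \<le> Pset_bound (Suc h)"
    using C by simp
  finally show ?case
    using Pset_subset_insert_children[OF dom, of x] U finite_subset by auto
qed

lemma fpow_not_dom: "c \<notin> dom f \<Longrightarrow> fpow f m c = (if m = 0 then Some c else None)"
  by (induction m) (auto simp: dom_def)

lemma in_T_nat_finite_card_closed:
  assumes "in_T_nat n A f"
  shows "finite A \<and> card A \<le> Pset_bound (Suc n) \<and> pm_closed A f"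
proof -
  have T: "pmua A f" "pm_connected A f" "\<exists>!c. c \<in> A \<and> c \<notin> dom f" and star: "star_cond A f"
    using assms by (auto simp: in_T_nat_def in_Tstar_def in_T_def)
  obtain k where k: "k \<le> n" "cA A f \<in> level A f k"
    using assms by (auto simp: in_T_nat_def)
  have c: "cA A f \<in> A" "cA A f \<notin> dom f"
    using theI'[OF T(3)] by (auto simp: cA_def)
  have "cA A f \<in> below A f (Suc k)"
    using k(2) by (simp add: level_def)
  then have below: "cA A f \<in> below A f (Suc n)"
    using below_mono[of "Suc k" "Suc n" A f] k(1) by (meson Suc_le_mono subsetD)
  have "A \<subseteq> Pset A f (cA A f)"
  proof
    fix x assume x: "x \<in> A"
    obtain m m' where "fpow f m x \<noteq> None" "fpow f m x = fpow f m' (cA A f)"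
      using T(2) x c(1) unfolding pm_connected_def by meson
    then have "fpow f m x = Some (cA A f)"
      using fpow_not_dom[OF c(2)] by (auto split: if_splits)
    then show "x \<in> Pset A f (cA A f)"
      using x by (auto simp: Pset_def)
  qed
  moreover have "dom f \<subseteq> A" "ran f \<subseteq> A"
    using T(1) by (auto simp: pmua_def)
  ultimately have "finite A \<and> card A \<le> Pset_bound (Suc n)"
    using finite_card_Pset_below[OF _ star below] by (meson card_mono finite_subset le_trans)
  moreover have "pm_closed A f"
    using \<open>ran f \<subseteq> A\<close> by (auto simp: pm_closed_def ran_def)
  ultimately show ?thesis
    by blast
qed

theorem lemma3p1:
  fixes n :: nat
  shows "finite ({(A, f :: 'a \<Rightarrow> 'a option). in_T_nat n A f}
                 // {((A, f), (B, g)). pm_iso A f B g})"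
proof (rule finite_quotient_if_code)
  let ?m = "Pset_bound (Suc n)"
  let ?X = "{(A, f :: 'a \<Rightarrow> 'a option). in_T_nat n A f}"
  let ?\<phi> = "\<lambda>p. iso_code ?m (fst p) (snd p)"
  have X: "finite (fst p) \<and> card (fst p) \<le> ?m \<and> pm_closed (fst p) (snd p)" if "p \<in> ?X" for p
    using that in_T_nat_finite_card_closed[of n "fst p" "snd p"] by (cases p) simp
  show "finite (?\<phi> ` ?X)"
    using X iso_code(1) by (intro finite_subset[OF _ finite_small_algebras]) blast
  fix p q assume "p \<in> ?X" "q \<in> ?X" "?\<phi> p = ?\<phi> q"
  then have "pm_iso (fst p) (snd p) (fst q) (snd q)" "pm_iso (fst q) (snd q) (fst p) (snd p)"
    using X pm_iso_if_iso_code_eq by metis+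
  then show "{((A, f), (B, g)). pm_iso A f B g} `` {p} = {((A, f), (B, g)). pm_iso A f B g} `` {q}"
    by (auto intro: pm_iso_trans)
qed

end
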